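(* Let $(A,[\cdot,\cdot])$ be an anticommutative algebra over a field $\mathbb K$ of characteristic $0$, i.e. $[x,y]=-[y,x]$ for all $x,y\in A$. Then $A$ is an Acaa-algebra if and only if $[x_1,[x_2,x_1]]=0$ for all $x_1,x_2\in A$.
   Context: An Acaa-algebra over a field $\mathbb K$ of characteristic $0$ is a $\mathbb K$-vector space $A$ with a bilinear product $[\cdot,\cdot]$ which is anticommutative, $[x,y]=-[y,x]$, and satisfies $[x_1,[x_2,x_3]]=[x_2,[x_3,x_1]]$ for all $x_1,x_2,x_3\in A$. *)

theory Defs
  imports Main "HOL.Vector_Spaces"
begin

definition bilinear_product ::
  "('k::field \<Rightarrow> 'v::ab_group_add \<Rightarrow> 'v) \<Rightarrow> ('v \<Rightarrow> 'v \<Rightarrow> 'v) \<Rightarrow> bool" where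
  "bilinear_product scale br \<longleftrightarrow>
     (\<forall>x y z. br (x + y) z = br x z + br y z) \<and>
     (\<forall>x y z. br x (y + z) = br x y + br x z) \<and>
     (\<forall>c x y. br (scale c x) y = scale c (br x y)) \<and>
     (\<forall>c x y. br x (scale c y) = scale c (br x y))"

definition anticommutative :: "('v::ab_group_add \<Rightarrow> 'v \<Rightarrow> 'v) \<Rightarrow> bool" where
  "anticommutative br \<longleftrightarrow> (\<forall>x y. br x y = - br y x)"

definition acaa_algebra ::
  "('k::field \<Rightarrow> 'v::ab_group_add \<Rightarrow> 'v) \<Rightarrow> ('v \<Rightarrow> 'v \<Rightarrow> 'v) \<Rightarrow> bool" where
  "acaa_algebra scale br \<longleftrightarrow>
     vector_space scale \<and> bilinear_product scale br \<and> anticommutative br \<and>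
     (\<forall>x1 x2 x3. br x1 (br x2 x3) = br x2 (br x3 x1))"

end

theory Submission
  imports Defs
begin

text \<open>Linearising the flexible-type identity \<open>[x,[y,x]] = 0\<close> in \<open>x\<close> gives
  \<open>[x,[y,z]] = -[z,[y,x]] = [z,[x,y]]\<close>; applying this twice yields the cyclic identity.
  Conversely, the cyclic identity with \<open>x\<^sub>3 = x\<^sub>1\<close> gives \<open>[x\<^sub>1,[x\<^sub>2,x\<^sub>1]] = [x\<^sub>2,[x\<^sub>1,x\<^sub>1]]\<close>,
  which vanishes because in characteristic \<open>0\<close> anticommutativity forces \<open>[x,x] = 0\<close>.\<close>

lemma bilinear_product_additive_left:
  assumes "bilinear_product scale br"
  shows "additive (\<lambda>x. br x z)"
  using assms by unfold_locales (simp add: bilinear_product_def)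

lemma bilinear_product_additive_right:
  assumes "bilinear_product scale br"
  shows "additive (br x)"
  using assms by unfold_locales (simp add: bilinear_product_def)

lemma vector_space_char_0_double_eq_zero:
  fixes scale :: "'k::field_char_0 \<Rightarrow> 'v::ab_group_add \<Rightarrow> 'v" and v :: 'v
  assumes "vector_space scale" and "v + v = 0"
  shows "v = 0"
proof -
  interpret vector_space scale by fact
  have "scale 2 v = 0"
    using scale_left_distrib[of 1 1 v] assms(2) by simp
  then have "scale (1/2) (scale 2 v) = 0"
    by simp
  then show ?thesis
    by simp
qed

lemma anticommutative_char_0_self_eq_zero:
  fixes scale :: "'k::field_char_0 \<Rightarrow> 'v::ab_group_add \<Rightarrow> 'v" and br :: "'v \<Rightarrow> 'v \<Rightarrow> 'v"
  assumes "vector_space scale" and "anticommutative br"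
  shows "br x x = 0"
proof -
  have "br x x + br x x = 0"
    using assms(2) unfolding anticommutative_def by (metis add.left_inverse)
  then show ?thesis
    using vector_space_char_0_double_eq_zero[OF assms(1)] by blast
qed

lemma flexible_imp_rotate:
  fixes br :: "'v::ab_group_add \<Rightarrow> 'v \<Rightarrow> 'v"
  assumes additive_left: "\<And>z. additive (\<lambda>x. br x z)"
    and additive_right: "\<And>x. additive (br x)"
    and "anticommutative br"
    and flexible: "\<And>x y. br x (br y x) = 0"
  shows "br x (br y z) = br z (br x y)"
proof -
  note add_left = additive.add[OF additive_left] and add_right = additive.add[OF additive_right]
  have "0 = br (x + z) (br y (x + z))"
    using flexible by simp
  also have "\<dots> = br x (br y x) + br x (br y z) + (br z (br y x) + br z (br y z))"
    by (simp add: add_left add_right)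
  also have "\<dots> = br x (br y z) + br z (br y x)"
    using flexible by simp
  finally have "br x (br y z) = - br z (br y x)"
    by (simp add: eq_neg_iff_add_eq_0)
  also have "\<dots> = br z (br x y)"
    using \<open>anticommutative br\<close> additive.minus[OF additive_right]
    unfolding anticommutative_def by metis
  finally show ?thesis .
qed

theorem mainTheorem1:
  fixes scale :: "'k::field_char_0 \<Rightarrow> 'v::ab_group_add \<Rightarrow> 'v"
    and br :: "'v \<Rightarrow> 'v \<Rightarrow> 'v"
  assumes "vector_space scale"
    and "bilinear_product scale br"
    and "anticommutative br"
  shows "acaa_algebra scale br \<longleftrightarrow> (\<forall>x1 x2. br x1 (br x2 x1) = 0)"
proof
  assume "acaa_algebra scale br"
  then have cyclic: "br x (br y z) = br y (br z x)" for x y z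
    unfolding acaa_algebra_def by blast
  have "br x (br y x) = 0" for x y
    using cyclic[of x y x] anticommutative_char_0_self_eq_zero[OF assms(1,3)]
      additive.zero[OF bilinear_product_additive_right[OF assms(2)]]
    by simp
  then show "\<forall>x1 x2. br x1 (br x2 x1) = 0"
    by blast
next
  assume "\<forall>x1 x2. br x1 (br x2 x1) = 0"
  then have rotate: "br x (br y z) = br z (br x y)" for x y z
    using flexible_imp_rotate bilinear_product_additive_left[OF assms(2)]
      bilinear_product_additive_right[OF assms(2)] assms(3)
    by blast
  have "br x (br y z) = br y (br z x)" for x y z
    using rotate[of x y z] rotate[of z x y] by simp
  then show "acaa_algebra scale br"
    unfolding acaa_algebra_def using assms by blast
qed

end
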